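(* Let $G=(V,E,\omega)\in\mathcal G$, $\gamma\geq0$, $\tau>0$, and $M\geq0$. Let $J_\tau(u):=\langle\chi_V-u,e^{-\tau L}u\rangle_{\mathcal V}$, $v^0\in\mathcal V^{ab}_M$, and let $\{v^k\}_{k=1}^N\subset\mathcal V^{ab}_M$ ($N\in\mathbb N\cup\{\infty\}$) be a sequence generated by the mcOKMBO scheme. Then for all $k\in\{1,\dots,N\}$, $v^k\in\operatorname{argmin}_{v\in\mathcal K_M}dJ^{v^{k-1}}_\tau(v)$, where $dJ^u_\tau(v):=\langle\chi_V-2e^{-\tau L}u,v\rangle_{\mathcal V}$. Moreover, for all $k\in\{1,\dots,N\}$, $J_\tau(v^k)\leq J_\tau(v^{k-1})$ with equality if and only if $v^k=v^{k-1}$. Finally, there is $K\geq0$ such that $v^k=v^K$ for all $k\geq K$.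
   Context: $\mathcal{G}$ is the set of finite, simple, connected, undirected, edge-weighted graphs $G=(V,E,\omega)$ with $V=\{1,\dots,n\}$, $n\geq2$, weights $\omega_{ij}=\omega_{ji}>0$ on edges, $0$ otherwise. $d_i=\sum_j\omega_{ij}$. $\mathcal V$: functions $V\to\mathbb R$. Fixed $r\in[0,1]$: $\langle u,v\rangle_{\mathcal V}=\sum_id_i^ru_iv_i$, $(\Delta u)_i=d_i^{-r}\sum_j\omega_{ij}(u_i-u_j)$, $\mathcal M(u)=\sum_id_i^ru_i$, $\mathcal A(u)=\frac{\mathcal M(u)}{\sum_id_i^r}\chi_V$ ($\chi_S$ indicator of $S$). For $u\in\mathcal V$ let $\varphi$ be the unique solution of $\Delta\varphi=u-\mathcal A(u)$, $\mathcal M(\varphi)=0$, and $Lu:=\Delta u+\gamma\varphi$; $e^{-\tau L}$ its exponential. $\mathcal K_M$: $[0,1]$-valued $u\in\mathcal V$ with $\mathcal M(u)=M$. $\mathcal V^{ab}_M$: the set of $u\in\mathcal K_M$ for which there is $i\in V$ with $u_j\in\{0,1\}$ for all $j\neq i$. mcOKMBO scheme: for $k=1,\dots,N$, let $u=e^{-\tau L}v^{k-1}$ (the time-$\tau$ solution of $du/dt=-Lu$, $u(0)=v^{k-1}$); choose a bijection $R:V\to\{1,\dots,n\}$ such that $R(i)<R(j)$ implies $u_i\geq u_j$ (ties broken arbitrarily), and write $\ell_p:=R^{-1}(p)$; let $i^*$ be the largest index with $\sum_{p=1}^{i^*}d_{\ell_p}^r\leq M$; define $v^k_{\ell_p}=1$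 for $p\leq i^*$, $v^k_{\ell_{i^*+1}}=d_{\ell_{i^*+1}}^{-r}\big(M-\sum_{p=1}^{i^*}d_{\ell_p}^r\big)$, and $v^k_{\ell_p}=0$ for $p\geq i^*+2$. *)

theory Defs
  imports "HOL-Analysis.Analysis" "HOL-Library.Extended_Nat"
begin

text \<open>Vertex set V is a finite type 'v (playing the role of {1..n}); functions on V are real^'v.
  Weights w :: 'v => 'v => real.\<close>

definition wgraph :: "('v::finite \<Rightarrow> 'v \<Rightarrow> real) \<Rightarrow> bool" where
  "wgraph w \<longleftrightarrow> CARD('v) \<ge> 2 \<and> (\<forall>i j. w i j = w j i) \<and> (\<forall>i j. 0 \<le> w i j)
     \<and> (\<forall>i. w i i = 0) \<and> (\<forall>i j. (i, j) \<in> {(a, b). 0 < w a b}\<^sup>*)"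

definition deg :: "('v::finite \<Rightarrow> 'v \<Rightarrow> real) \<Rightarrow> 'v \<Rightarrow> real" where
  "deg w i = (\<Sum>j\<in>UNIV. w i j)"

definition innerV :: "('v::finite \<Rightarrow> 'v \<Rightarrow> real) \<Rightarrow> real \<Rightarrow> real^'v \<Rightarrow> real^'v \<Rightarrow> real" where
  "innerV w r u v = (\<Sum>i\<in>UNIV. deg w i powr r * u$i * v$i)"

definition lap :: "('v::finite \<Rightarrow> 'v \<Rightarrow> real) \<Rightarrow> real \<Rightarrow> real^'v \<Rightarrow> real^'v" where
  "lap w r u = (\<chi> i. deg w i powr (-r) * (\<Sum>j\<in>UNIV. w i j * (u$i - u$j)))"

definition mass :: "('v::finite \<Rightarrow> 'v \<Rightarrow> real) \<Rightarrow> real \<Rightarrow> real^'v \<Rightarrow> real" where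
  "mass w r u = (\<Sum>i\<in>UNIV. deg w i powr r * u$i)"

definition avg :: "('v::finite \<Rightarrow> 'v \<Rightarrow> real) \<Rightarrow> real \<Rightarrow> real^'v \<Rightarrow> real^'v" where
  "avg w r u = (\<chi> i. mass w r u / (\<Sum>j\<in>UNIV. deg w j powr r))"

definition phi :: "('v::finite \<Rightarrow> 'v \<Rightarrow> real) \<Rightarrow> real \<Rightarrow> real^'v \<Rightarrow> real^'v" where
  "phi w r u = (THE \<phi>. lap w r \<phi> = u - avg w r u \<and> mass w r \<phi> = 0)"

definition Lop :: "('v::finite \<Rightarrow> 'v \<Rightarrow> real) \<Rightarrow> real \<Rightarrow> real \<Rightarrow> real^'v \<Rightarrow> real^'v" where
  "Lop w r \<gamma> u = lap w r u + \<gamma> *\<^sub>R phi w r u"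

definition expL :: "('v::finite \<Rightarrow> 'v \<Rightarrow> real) \<Rightarrow> real \<Rightarrow> real \<Rightarrow> real \<Rightarrow> real^'v \<Rightarrow> real^'v" where
  "expL w r \<gamma> \<tau> u = (\<Sum>k. ((- \<tau>) ^ k / fact k) *\<^sub>R ((Lop w r \<gamma> ^^ k) u))"

definition KM :: "('v::finite \<Rightarrow> 'v \<Rightarrow> real) \<Rightarrow> real \<Rightarrow> real \<Rightarrow> (real^'v) set" where
  "KM w r M = {u. (\<forall>i. 0 \<le> u$i \<and> u$i \<le> 1) \<and> mass w r u = M}"

definition VabM :: "('v::finite \<Rightarrow> 'v \<Rightarrow> real) \<Rightarrow> real \<Rightarrow> real \<Rightarrow> (real^'v) set" where
  "VabM w r M = {u \<in> KM w r M. \<exists>i. \<forall>j. j \<noteq> i \<longrightarrow> u$j = 0 \<or> u$j = 1}"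

definition Jtau :: "('v::finite \<Rightarrow> 'v \<Rightarrow> real) \<Rightarrow> real \<Rightarrow> real \<Rightarrow> real \<Rightarrow> real^'v \<Rightarrow> real" where
  "Jtau w r \<gamma> \<tau> u = innerV w r (1 - u) (expL w r \<gamma> \<tau> u)"

definition dJ :: "('v::finite \<Rightarrow> 'v \<Rightarrow> real) \<Rightarrow> real \<Rightarrow> real \<Rightarrow> real \<Rightarrow> real^'v \<Rightarrow> real^'v \<Rightarrow> real" where
  "dJ w r \<gamma> \<tau> u v = innerV w r (1 - 2 *\<^sub>R expL w r \<gamma> \<tau> u) v"

text \<open>One mcOKMBO step from vold to vnew (ties broken arbitrarily: any admissible ranking R).\<close>
definition mcstep :: "('v::finite \<Rightarrow> 'v \<Rightarrow> real) \<Rightarrow> real \<Rightarrow> real \<Rightarrow> real \<Rightarrow> real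
     \<Rightarrow> real^'v \<Rightarrow> real^'v \<Rightarrow> bool" where
  "mcstep w r \<gamma> \<tau> M vold vnew \<longleftrightarrow>
    (let u = expL w r \<gamma> \<tau> vold; n = CARD('v) in
     \<exists>R :: 'v \<Rightarrow> nat. bij_betw R UNIV {1..n} \<and> (\<forall>i j. R i < R j \<longrightarrow> u$i \<ge> u$j) \<and>
       (let l = inv_into UNIV R;
            istar = (GREATEST i. i \<le> n \<and> (\<Sum>p=1..i. deg w (l p) powr r) \<le> M) in
        \<forall>p\<in>{1..n}. vnew $ (l p) =
           (if p \<le> istar then 1
            else if p = istar + 1 then deg w (l p) powr (-r) * (M - (\<Sum>q=1..istar. deg w (l q) powr r))
            else 0)))"

end

theory Submission
  imports Defs
begin

text \<open>The operator L is self-adjoint for the weighted inner product, because both the graph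
  Laplacian and the solution operator of the mass-constrained Poisson problem are, and it
  annihilates constants. Hence e^{-\<tau>L} is self-adjoint, fixes constants, and is positive definite,
  being the square of the invertible operator e^{-\<tau>L/2}. This makes J concave:
  J(v) - J(u) = dJ^u(v) - dJ^u(u) - <v - u, e^{-\<tau>L}(v - u)>. An mcOKMBO step puts the mass
  where e^{-\<tau>L}v^{k-1} is largest, i.e. it is a threshold rule, which minimises the linear
  functional dJ over K_M (bathtub principle). So J strictly decreases unless the iterate is
  stationary, and since V^ab_M is finite, the scheme stalls after finitely many steps.\<close>

subsection \<open>The weighted inner product and the graph operators\<close>

lemma innerV_comm: "innerV w r x y = innerV w r y x"
  unfolding innerV_def by (simp add: ac_simps)

lemma linear_innerV: "linear (innerV w r x)"
  by (rule linearI) (simp_all add: innerV_def sum.distrib sum_distrib_left algebra_simps)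

lemma innerV_add_left: "innerV w r (a + b) x = innerV w r a x + innerV w r b x"
  by (simp add: innerV_def sum.distrib algebra_simps)

lemma innerV_diff_left: "innerV w r (a - b) x = innerV w r a x - innerV w r b x"
  by (simp add: innerV_def sum_subtractf algebra_simps)

lemma innerV_scaleR_left: "innerV w r (c *\<^sub>R a) x = c * innerV w r a x"
  by (simp add: innerV_def sum_distrib_left algebra_simps)

lemma innerV_add_right: "innerV w r x (a + b) = innerV w r x a + innerV w r x b"
  by (simp add: innerV_def sum.distrib algebra_simps)

lemma innerV_diff_right: "innerV w r x (a - b) = innerV w r x a - innerV w r x b"
  by (simp add: innerV_def sum_subtractf algebra_simps)

lemma innerV_scaleR_right: "innerV w r x (c *\<^sub>R a) = c * innerV w r x a"
  by (simp add: innerV_def sum_distrib_left algebra_simps)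

lemma innerV_zero_right [simp]: "innerV w r x 0 = 0"
  by (simp add: innerV_def)

lemma mass_eq_innerV_one: "mass w r u = innerV w r 1 u"
  by (simp add: mass_def innerV_def)

lemma innerV_avg:
  "innerV w r x (avg w r y) = mass w r x * (mass w r y / (\<Sum>j\<in>UNIV. deg w j powr r))"
  by (simp add: innerV_def avg_def mass_def sum_distrib_right sum_divide_distrib)

lemma linear_mass: "linear (mass w r)"
  by (rule linearI) (simp_all add: mass_def sum.distrib sum_distrib_left algebra_simps)

lemma linear_avg: "linear (avg w r)"
  by (rule linearI)
    (simp_all add: avg_def vec_eq_iff linear_add[OF linear_mass] linear_scale[OF linear_mass]
      add_divide_distrib)

lemma linear_lap: "linear (lap w r)"
proof (rule linearI)
  fix a b :: "real^'a"
  have "(\<Sum>j\<in>UNIV. w i j * ((a + b)$i - (a + b)$j))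
      = (\<Sum>j\<in>UNIV. w i j * (a$i - a$j)) + (\<Sum>j\<in>UNIV. w i j * (b$i - b$j))" for i
    by (simp add: sum.distrib[symmetric] algebra_simps)
  then show "lap w r (a + b) = lap w r a + lap w r b"
    by (simp add: lap_def vec_eq_iff distrib_left)
next
  fix c and a :: "real^'a"
  have "(\<Sum>j\<in>UNIV. w i j * ((c *\<^sub>R a)$i - (c *\<^sub>R a)$j)) = c * (\<Sum>j\<in>UNIV. w i j * (a$i - a$j))" for i
    by (simp add: sum_distrib_left algebra_simps)
  then show "lap w r (c *\<^sub>R a) = c *\<^sub>R lap w r a"
    by (simp add: lap_def vec_eq_iff)
qed

lemma lap_one: "lap w r 1 = 0"
  by (simp add: lap_def vec_eq_iff)

lemma exp_series_coeff_add:
  fixes s t :: real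
  shows "(\<Sum>i\<le>n. (-s)^i / fact i * ((-t)^(n-i) / fact (n-i))) = (-(s+t))^n / fact n"
proof -
  have "(-s + -t)^n /\<^sub>R fact n = (\<Sum>i\<le>n. ((-s)^i /\<^sub>R fact i) * ((-t)^(n-i) /\<^sub>R fact (n-i)))"
    by (rule exp_series_add_commuting) simp
  then show ?thesis by (simp add: divide_inverse mult_ac)
qed

subsection \<open>Minimising the linearised energy\<close>

lemma threshold_minimises_weighted_sum:
  fixes d c x y :: "'i::finite \<Rightarrow> real"
  assumes "\<And>i. 0 \<le> d i" and "\<And>i. 0 \<le> y i \<and> y i \<le> 1"
    and "\<And>i. c i < \<theta> \<Longrightarrow> x i = 1" and "\<And>i. \<theta> < c i \<Longrightarrow> x i = 0"
    and "(\<Sum>i\<in>UNIV. d i * x i) = (\<Sum>i\<in>UNIV. d i * y i)"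
  shows "(\<Sum>i\<in>UNIV. d i * c i * x i) \<le> (\<Sum>i\<in>UNIV. d i * c i * y i)"
proof -
  have "(c i - \<theta>) * (x i - y i) \<le> 0" for i
    using assms(2-4)[of i] by (cases "c i < \<theta>"; cases "\<theta> < c i") (auto simp: mult_le_0_iff)
  then have "(\<Sum>i\<in>UNIV. d i * ((c i - \<theta>) * (x i - y i))) \<le> 0"
    by (intro sum_nonpos) (simp add: mult_nonneg_nonpos assms(1))
  moreover have "(\<Sum>i\<in>UNIV. d i * ((c i - \<theta>) * (x i - y i)))
      = (\<Sum>i\<in>UNIV. d i * c i * x i) - (\<Sum>i\<in>UNIV. d i * c i * y i)
        - \<theta> * ((\<Sum>i\<in>UNIV. d i * x i) - (\<Sum>i\<in>UNIV. d i * y i))"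
    by (simp only: sum_distrib_left sum_subtractf[symmetric]) (simp add: algebra_simps)
  ultimately show ?thesis using assms(5) by simp
qed

lemma mcstep_threshold:
  assumes "mcstep w r \<gamma> \<tau> M vold vnew"
  obtains \<theta> where "\<And>i. \<theta> < expL w r \<gamma> \<tau> vold $ i \<Longrightarrow> vnew $ i = 1"
    and "\<And>i. expL w r \<gamma> \<tau> vold $ i < \<theta> \<Longrightarrow> vnew $ i = 0"
proof -
  define e where "e = expL w r \<gamma> \<tau> vold"
  note that = that[folded e_def]
  define n where "n = CARD('a)"
  define ist where "ist R = (GREATEST i. i \<le> n \<and> (\<Sum>p=1..i. deg w (inv_into UNIV R p) powr r) \<le> M)"
    for R :: "'a \<Rightarrow> nat"
  define frac where "frac R p = deg w (inv_into UNIV R p) powr (-r)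
    * (M - (\<Sum>q=1..ist R. deg w (inv_into UNIV R q) powr r))" for R :: "'a \<Rightarrow> nat" and p
  from assms obtain R where bij: "bij_betw R UNIV {1..n}"
      and ord: "\<And>i j. R i < R j \<Longrightarrow> e$j \<le> e$i"
      and vnew: "\<forall>p\<in>{1..n}. vnew $ (inv_into UNIV R p) =
        (if p \<le> ist R then 1 else if p = ist R + 1 then frac R p else 0)"
    unfolding mcstep_def Let_def e_def n_def ist_def frac_def by blast
  have inj: "inj R" using bij by (rule bij_betw_imp_inj_on)
  have R_range: "R i \<in> {1..n}" for i using bij_betwE[OF bij] by simp
  have "vnew $ i = (if R i \<le> ist R then 1 else if R i = ist R + 1 then frac R (R i) else 0)" for i
    using bspec[OF vnew R_range[of i]] by (simp add: inv_f_f[OF inj])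
  then have vnew_1: "R i \<le> ist R \<Longrightarrow> vnew $ i = 1" and vnew_0: "ist R + 1 < R i \<Longrightarrow> vnew $ i = 0"
    for i by simp_all
  show ?thesis
  proof (cases "ist R < n")
    case True
    then have "ist R + 1 \<in> R ` UNIV" using bij_betw_imp_surj_on[OF bij] by simp
    then obtain j0 where R_j0: "R j0 = ist R + 1" by (metis rangeE)
    show ?thesis
    proof (rule that[of "e$j0"])
      fix i assume "e$j0 < e$i"
      then have "R i \<noteq> R j0" and "\<not> R j0 < R i"
        using ord[of j0 i] by (auto simp: inj_eq[OF inj])
      then have "R i < R j0" by simp
      then show "vnew $ i = 1" using R_j0 vnew_1 by simp
    next
      fix i assume "e$i < e$j0"
      then have "R i \<noteq> R j0" and "\<not> R i < R j0"
        using ord[of i j0] by (auto simp: inj_eq[OF inj])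
      then have "R j0 < R i" by simp
      then show "vnew $ i = 0" using R_j0 vnew_0 by simp
    qed
  next
    case False
    have "Min (range (($) e)) - 1 < e$i" for i
    proof -
      have "Min (range (($) e)) \<le> e$i" by (rule Min_le) auto
      then show ?thesis by linarith
    qed
    moreover have "vnew $ i = 1" for i using False R_range[of i] vnew_1 by auto
    ultimately show ?thesis using that[of "Min (range (($) e)) - 1"] by (meson not_less_iff_gr_or_eq)
  qed
qed

lemma mcstep_minimises_dJ:
  assumes "mcstep w r \<gamma> \<tau> M vold vnew" and "mass w r vnew = M" and "u \<in> KM w r M"
  shows "dJ w r \<gamma> \<tau> vold vnew \<le> dJ w r \<gamma> \<tau> vold u"
proof -
  define e where "e = expL w r \<gamma> \<tau> vold"
  obtain \<theta> where up: "\<And>i. \<theta> < e$i \<Longrightarrow> vnew $ i = 1" and down: "\<And>i. e$i < \<theta> \<Longrightarrow> vnew $ i = 0"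
    using mcstep_threshold[OF assms(1)] unfolding e_def by blast
  have "dJ w r \<gamma> \<tau> vold x = (\<Sum>i\<in>UNIV. deg w i powr r * (1 - 2 * e$i) * x$i)" for x
    by (simp add: dJ_def innerV_def e_def)
  moreover have "(\<Sum>i\<in>UNIV. deg w i powr r * (1 - 2 * e$i) * vnew$i)
      \<le> (\<Sum>i\<in>UNIV. deg w i powr r * (1 - 2 * e$i) * u$i)"
  proof (rule threshold_minimises_weighted_sum[where d = "\<lambda>i. deg w i powr r" and c = "\<lambda>i. 1 - 2 * e$i"
        and x = "\<lambda>i. vnew$i" and y = "\<lambda>i. u$i" and \<theta> = "1 - 2 * \<theta>"])
    show "0 \<le> u$i \<and> u$i \<le> 1" for i using assms(3) by (simp add: KM_def)
    show "(\<Sum>i\<in>UNIV. deg w i powr r * vnew$i) = (\<Sum>i\<in>UNIV. deg w i powr r * u$i)"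
      using assms(2,3) by (simp add: KM_def mass_def)
  qed (simp_all add: up down)
  ultimately show ?thesis by simp
qed

subsection \<open>Spectral properties on a connected weighted graph\<close>

locale graph_operators =
  fixes w :: "'v::finite \<Rightarrow> 'v \<Rightarrow> real" and r \<gamma> :: real
  assumes wgraph: "wgraph w"
begin

lemma weight_sym: "w i j = w j i"
  and weight_nonneg: "0 \<le> w i j"
  using wgraph unfolding wgraph_def by auto

lemma deg_pos: "0 < deg w i"
proof -
  obtain j :: 'v where "j \<noteq> i"
  proof -
    have "2 \<le> card (UNIV :: 'v set)" using wgraph by (simp add: wgraph_def)
    then have "\<not> (UNIV::'v set) \<subseteq> {i}" using card_mono[of "{i}" UNIV] by fastforce
    then show ?thesis using that by blast
  qed
  moreover have "(i, j) \<in> {(a, b). 0 < w a b}\<^sup>*" using wgraph by (simp add: wgraph_def)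
  ultimately obtain k where "0 < w i k"
    by (metis (no_types, lifting) case_prodD converse_rtranclE mem_Collect_eq)
  moreover have "w i k \<le> deg w i"
    unfolding deg_def by (rule member_le_sum) (auto simp: weight_nonneg)
  ultimately show ?thesis by simp
qed

lemma deg_powr_pos: "0 < deg w i powr s"
  using deg_pos[of i] by simp

lemma sum_deg_powr_pos: "0 < (\<Sum>j\<in>UNIV. deg w j powr s)"
  by (rule sum_pos[OF finite UNIV_not_empty deg_powr_pos])

lemma innerV_self_pos:
  assumes "x \<noteq> 0" shows "0 < innerV w r x x"
proof -
  obtain i where "x$i \<noteq> 0" using assms by (auto simp: vec_eq_iff)
  then have "0 < deg w i powr r * (x$i * x$i)"
    using not_real_square_gt_zero by (blast intro: mult_pos_pos deg_powr_pos)
  also have "\<dots> \<le> innerV w r x x" unfolding innerV_def mult.assoc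
    by (rule member_le_sum) (simp_all add: less_imp_le[OF deg_powr_pos])
  finally show ?thesis .
qed

lemma innerV_lap: "innerV w r x (lap w r y) = (\<Sum>i\<in>UNIV. \<Sum>j\<in>UNIV. w i j * (y$i - y$j) * x$i)"
proof -
  have inverse: "deg w i powr r * deg w i powr (-r) = 1" for i
    using deg_pos[of i] by (simp add: powr_add[symmetric])
  have "innerV w r x (lap w r y) = (\<Sum>i\<in>UNIV. (deg w i powr r * deg w i powr (-r))
      * (x$i * (\<Sum>j\<in>UNIV. w i j * (y$i - y$j))))"
    unfolding innerV_def lap_def by (simp add: ac_simps)
  also have "\<dots> = (\<Sum>i\<in>UNIV. \<Sum>j\<in>UNIV. w i j * (y$i - y$j) * x$i)"
    by (simp add: inverse sum_distrib_left ac_simps)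
  finally show ?thesis .
qed

lemma lap_selfadj: "innerV w r x (lap w r y) = innerV w r y (lap w r x)"
proof -
  have "(\<Sum>i\<in>UNIV. \<Sum>j\<in>UNIV. w i j * y$j * x$i) = (\<Sum>i\<in>UNIV. \<Sum>j\<in>UNIV. w i j * x$j * y$i)"
    by (subst sum.swap) (simp add: weight_sym ac_simps)
  then show ?thesis unfolding innerV_lap by (simp add: algebra_simps sum_subtractf)
qed

lemma mass_lap: "mass w r (lap w r y) = 0"
  using lap_selfadj[of 1 y] by (simp add: mass_eq_innerV_one lap_one)

lemma mass_avg: "mass w r (avg w r u) = mass w r u"
proof -
  have "mass w r (avg w r u) = (\<Sum>i\<in>UNIV. deg w i powr r) * (mass w r u / (\<Sum>j\<in>UNIV. deg w j powr r))"
    by (simp add: mass_def avg_def sum_distrib_right sum_divide_distrib)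
  then show ?thesis using sum_deg_powr_pos[of r] by simp
qed

lemma avg_one: "avg w r 1 = 1"
  using sum_deg_powr_pos[of r] by (simp add: mass_def avg_def vec_eq_iff)

lemma avg_eq_0_iff: "avg w r u = 0 \<longleftrightarrow> mass w r u = 0"
  using sum_deg_powr_pos[of r] by (auto simp: avg_def vec_eq_iff)

text \<open>The Dirichlet energy of y is 2 <y, lap y>; connectedness turns its vanishing into constancy.\<close>
lemma lap_eq_0_imp_const:
  assumes "lap w r y = 0" shows "y$i = y$j"
proof -
  have swap: "(\<Sum>i\<in>UNIV. \<Sum>j\<in>UNIV. w i j * (y$i - y$j) * y$i)
      = (\<Sum>i\<in>UNIV. \<Sum>j\<in>UNIV. w i j * (y$j - y$i) * y$j)"
    by (subst sum.swap) (simp add: weight_sym)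
  have "(\<Sum>i\<in>UNIV. \<Sum>j\<in>UNIV. w i j * (y$i - y$j)^2)
      = (\<Sum>i\<in>UNIV. \<Sum>j\<in>UNIV. w i j * (y$i - y$j) * y$i)
        + (\<Sum>i\<in>UNIV. \<Sum>j\<in>UNIV. w i j * (y$j - y$i) * y$j)"
    by (simp add: sum.distrib[symmetric] power2_eq_square algebra_simps)
  also have "\<dots> = 0"
    using swap innerV_lap[of y y] assms by simp
  finally have "w a b * (y$a - y$b)^2 = 0" for a b
    by (simp add: sum_nonneg_eq_0_iff sum_nonneg weight_nonneg)
  then have edge: "0 < w a b \<Longrightarrow> y$a = y$b" for a b
    by (metis less_irrefl mult_eq_0_iff power_eq_0_iff right_minus_eq)
  have "(i, j) \<in> {(a, b). 0 < w a b}\<^sup>*" using wgraph by (simp add: wgraph_def)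
  then show ?thesis by (induction rule: rtrancl_induct) (auto dest: edge)
qed

lemma lap_plus_avg_eq_0D:
  assumes "lap w r x + avg w r x = 0" shows "x = 0"
proof -
  have "mass w r (lap w r x + avg w r x) = 0" using assms by (simp add: linear_0[OF linear_mass])
  then have mass0: "mass w r x = 0"
    by (simp add: linear_add[OF linear_mass] mass_lap mass_avg)
  then have "avg w r x = 0" by (simp add: avg_eq_0_iff)
  then have lap0: "lap w r x = 0" using assms by simp
  have "mass w r x = (\<Sum>j\<in>UNIV. deg w j powr r) * x$i" for i
    unfolding mass_def sum_distrib_right
    by (intro sum.cong refl) (metis lap_eq_0_imp_const[OF lap0])
  then have "(\<Sum>j\<in>UNIV. deg w j powr r) * x$i = 0" for i using mass0 by simp
  then show ?thesis using sum_deg_powr_pos[of r] by (simp add: vec_eq_iff)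
qed

lemma phi_ex1: "\<exists>!p. lap w r p = u - avg w r u \<and> mass w r p = 0"
proof -
  let ?T = "\<lambda>x. lap w r x + avg w r x"
  have lin: "linear ?T" by (intro linear_compose_add linear_lap linear_avg)
  have "inj ?T"
  proof (rule injI)
    fix x y assume "?T x = ?T y"
    then have "?T (x - y) = 0" by (simp add: linear_diff[OF lin])
    then show "x = y" using lap_plus_avg_eq_0D[of "x - y"] by simp
  qed
  then have "surj ?T" by (rule linear_injective_imp_surjective[OF lin _ refl])
  then obtain p where p: "?T p = u - avg w r u" using surjD[of ?T "u - avg w r u"] by auto
  then have "mass w r (?T p) = mass w r (u - avg w r u)" by simp
  then have mass_p: "mass w r p = 0"
    by (simp add: linear_add[OF linear_mass] linear_diff[OF linear_mass] mass_lap mass_avg)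
  then have "avg w r p = 0" by (simp add: avg_eq_0_iff)
  with p mass_p have sol: "lap w r p = u - avg w r u \<and> mass w r p = 0" by simp
  show ?thesis
  proof (rule ex1I[of _ p])
    fix q assume q: "lap w r q = u - avg w r u \<and> mass w r q = 0"
    have "mass w r (q - p) = 0" using q mass_p by (simp add: linear_diff[OF linear_mass])
    then have "avg w r (q - p) = 0" by (simp add: avg_eq_0_iff)
    moreover have "lap w r (q - p) = 0" using q sol by (simp add: linear_diff[OF linear_lap])
    ultimately show "q = p" using lap_plus_avg_eq_0D[of "q - p"] by simp
  qed (fact sol)
qed

lemma phi_spec: "lap w r (phi w r u) = u - avg w r u" "mass w r (phi w r u) = 0"
  using theI'[OF phi_ex1] unfolding phi_def by blast+

lemma phi_unique: "lap w r p = u - avg w r u \<Longrightarrow> mass w r p = 0 \<Longrightarrow> phi w r u = p"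
  unfolding phi_def using phi_ex1 by (intro the1_equality) auto

lemma linear_phi: "linear (phi w r)"
proof (rule linearI)
  fix a b
  show "phi w r (a + b) = phi w r a + phi w r b"
    using phi_spec[of a] phi_spec[of b]
    by (intro phi_unique)
      (simp_all add: linear_add[OF linear_lap] linear_add[OF linear_avg] linear_add[OF linear_mass])
next
  fix c a
  show "phi w r (c *\<^sub>R a) = c *\<^sub>R phi w r a"
    using phi_spec[of a]
    by (intro phi_unique)
      (simp_all add: linear_scale[OF linear_lap] linear_scale[OF linear_avg]
        linear_scale[OF linear_mass] scaleR_diff_right)
qed

lemma phi_selfadj: "innerV w r (phi w r u) v = innerV w r u (phi w r v)"
proof -
  let ?p = "phi w r u" and ?q = "phi w r v"
  have "v = lap w r ?q + avg w r v" using phi_spec(1)[of v] by simp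
  then have "innerV w r ?p v = innerV w r ?p (lap w r ?q)"
    using phi_spec(2)[of u] by (metis innerV_add_right innerV_avg add.right_neutral mult_zero_left)
  also have "\<dots> = innerV w r ?q (lap w r ?p)" by (rule lap_selfadj)
  also have "\<dots> = innerV w r ?q u"
    using phi_spec[of u] phi_spec(2)[of v] by (simp add: innerV_diff_right innerV_avg)
  finally show ?thesis by (simp add: innerV_comm)
qed

lemma linear_Lop: "linear (Lop w r \<gamma>)"
proof -
  have "linear (\<lambda>x. lap w r x + \<gamma> *\<^sub>R phi w r x)"
    by (intro linear_compose_add linear_lap linear_compose_scale_right linear_phi)
  then show ?thesis unfolding Lop_def[abs_def] .
qed

lemma Lop_selfadj: "innerV w r (Lop w r \<gamma> x) y = innerV w r x (Lop w r \<gamma> y)"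
  using lap_selfadj[of x y] phi_selfadj[of x y]
  by (simp add: Lop_def innerV_add_left innerV_add_right innerV_scaleR_left innerV_scaleR_right
      innerV_comm[of _ _ "lap w r x"])

lemma Lop_one: "Lop w r \<gamma> 1 = 0"
proof -
  have "phi w r 1 = 0"
    by (rule phi_unique) (simp_all add: avg_one linear_0[OF linear_lap] mass_def)
  then show ?thesis by (simp add: Lop_def lap_one)
qed

lemma linear_Lop_funpow: "linear (Lop w r \<gamma> ^^ k)"
proof (induction k)
  case 0 show ?case by (simp add: linear_id[unfolded id_def])
next
  case (Suc k) show ?case unfolding funpow.simps(2) by (rule linear_compose[OF Suc.IH linear_Lop])
qed

lemma Lop_funpow_selfadj:
  "innerV w r ((Lop w r \<gamma> ^^ i) y) ((Lop w r \<gamma> ^^ j) x) = innerV w r y ((Lop w r \<gamma> ^^ (i + j)) x)"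
proof (induction i arbitrary: j)
  case (Suc i)
  have "innerV w r ((Lop w r \<gamma> ^^ Suc i) y) ((Lop w r \<gamma> ^^ j) x)
      = innerV w r ((Lop w r \<gamma> ^^ i) y) ((Lop w r \<gamma> ^^ Suc j) x)"
    by (simp add: Lop_selfadj)
  also have "\<dots> = innerV w r y ((Lop w r \<gamma> ^^ (i + Suc j)) x)" by (rule Suc.IH)
  finally show ?case by simp
qed simp

lemma Lop_funpow_Suc_one: "(Lop w r \<gamma> ^^ Suc k) 1 = 0"
  by (induction k) (simp_all add: Lop_one linear_0[OF linear_Lop])

lemma Lop_funpow_bound:
  obtains C where "0 < C" "\<And>k z. norm ((Lop w r \<gamma> ^^ k) z) \<le> C ^ k * norm z"
proof -
  obtain C where C: "0 < C" "\<And>z. norm (Lop w r \<gamma> z) \<le> C * norm z"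
    using linear_bounded_pos[OF linear_Lop] by blast
  have "norm ((Lop w r \<gamma> ^^ k) z) \<le> C ^ k * norm z" for k z
  proof (induction k)
    case (Suc k)
    have "norm ((Lop w r \<gamma> ^^ Suc k) z) \<le> C * norm ((Lop w r \<gamma> ^^ k) z)" by (simp add: C(2))
    also have "\<dots> \<le> C * (C ^ k * norm z)" using Suc C(1) by simp
    finally show ?case by (simp add: mult.assoc)
  qed simp
  then show ?thesis using that C(1) by blast
qed

subsection \<open>The heat semigroup\<close>

lemma expL_terms_summable:
  shows "summable (\<lambda>k. norm (((-t)^k / fact k) *\<^sub>R (Lop w r \<gamma> ^^ k) u))"
    and "summable (\<lambda>k. norm ((-t)^k / fact k * ((Lop w r \<gamma> ^^ k) u)$m))"
proof -
  obtain C where C: "0 < C" "\<And>k z. norm ((Lop w r \<gamma> ^^ k) z) \<le> C ^ k * norm z"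
    using Lop_funpow_bound by blast
  let ?g = "\<lambda>k. norm u * (inverse (fact k) * (\<bar>t\<bar> * C) ^ k)"
  have g: "summable ?g" by (intro summable_mult summable_exp)
  have bound: "\<bar>(-t)^k / fact k\<bar> * norm ((Lop w r \<gamma> ^^ k) u) \<le> ?g k" for k
  proof -
    have "\<bar>(-t)^k / fact k\<bar> * norm ((Lop w r \<gamma> ^^ k) u) \<le> \<bar>(-t)^k / fact k\<bar> * (C ^ k * norm u)"
      by (intro mult_left_mono C(2)) auto
    also have "\<dots> = ?g k" by (simp add: power_abs power_mult_distrib divide_inverse abs_mult)
    finally show ?thesis .
  qed
  show "summable (\<lambda>k. norm (((-t)^k / fact k) *\<^sub>R (Lop w r \<gamma> ^^ k) u))"
    by (rule summable_comparison_test'[OF g, of 0]) (use bound in simp)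
  have "\<bar>((Lop w r \<gamma> ^^ k) u)$m\<bar> \<le> norm ((Lop w r \<gamma> ^^ k) u)" for k
    by (rule component_le_norm_cart)
  then have "\<bar>(-t)^k / fact k\<bar> * \<bar>((Lop w r \<gamma> ^^ k) u)$m\<bar> \<le> ?g k" for k
    by (meson abs_ge_zero bound mult_left_mono order_trans)
  then show "summable (\<lambda>k. norm ((-t)^k / fact k * ((Lop w r \<gamma> ^^ k) u)$m))"
    by (intro summable_comparison_test'[OF g, of 0]) (simp add: abs_mult)
qed

lemma expL_sums: "(\<lambda>k. ((-t)^k / fact k) *\<^sub>R (Lop w r \<gamma> ^^ k) u) sums expL w r \<gamma> t u"
  unfolding expL_def by (rule summable_sums[OF summable_norm_cancel[OF expL_terms_summable(1)]])

lemma expL_component_sums: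
  "(\<lambda>k. (-t)^k / fact k * ((Lop w r \<gamma> ^^ k) u)$m) sums (expL w r \<gamma> t u)$m"
  using bounded_linear.sums[OF bounded_linear_vec_nth[of m] expL_sums] by simp

lemma innerV_expL_sums:
  "(\<lambda>k. (-t)^k / fact k * innerV w r y ((Lop w r \<gamma> ^^ k) u)) sums innerV w r y (expL w r \<gamma> t u)"
  using bounded_linear.sums[OF linear_innerV[unfolded linear_conv_bounded_linear] expL_sums]
  by (simp add: linear_scale[OF linear_innerV])

text \<open>The Cauchy product of the two exponential series, with L moved across the inner product.\<close>
lemma innerV_expL_expL:
  "innerV w r (expL w r \<gamma> s y) (expL w r \<gamma> t x) = innerV w r y (expL w r \<gamma> (s + t) x)"
proof -
  let ?L = "Lop w r \<gamma>"
  define a where "a = (\<lambda>m k. (-s)^k / fact k * ((?L ^^ k) y)$m)"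
  define b where "b = (\<lambda>m k. (-t)^k / fact k * ((?L ^^ k) x)$m)"
  have "(\<lambda>n. \<Sum>i\<le>n. a m i * b m (n - i)) sums ((expL w r \<gamma> s y)$m * (expL w r \<gamma> t x)$m)" for m
  proof -
    have "(\<lambda>n. \<Sum>i\<le>n. a m i * b m (n - i)) sums ((\<Sum>k. a m k) * (\<Sum>k. b m k))"
      unfolding a_def b_def by (intro Cauchy_product_sums expL_terms_summable(2))
    moreover have "(\<Sum>k. a m k) = (expL w r \<gamma> s y)$m" "(\<Sum>k. b m k) = (expL w r \<gamma> t x)$m"
      unfolding a_def b_def by (rule sums_unique[OF expL_component_sums, symmetric])+
    ultimately show ?thesis by simp
  qed
  then have prod: "(\<lambda>n. \<Sum>m\<in>UNIV. deg w m powr r * (\<Sum>i\<le>n. a m i * b m (n - i))) sums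
      innerV w r (expL w r \<gamma> s y) (expL w r \<gamma> t x)"
    unfolding innerV_def mult.assoc by (intro sums_sum sums_mult)
  have terms: "(\<Sum>m\<in>UNIV. deg w m powr r * (\<Sum>i\<le>n. a m i * b m (n - i)))
      = (-(s+t))^n / fact n * innerV w r y ((?L ^^ n) x)" for n
  proof -
    have "(\<Sum>m\<in>UNIV. deg w m powr r * (\<Sum>i\<le>n. a m i * b m (n - i)))
        = (\<Sum>i\<le>n. ((-s)^i / fact i * ((-t)^(n-i) / fact (n-i)))
             * innerV w r ((?L ^^ i) y) ((?L ^^ (n-i)) x))"
      unfolding a_def b_def innerV_def
      by (simp add: sum_distrib_left sum_distrib_right ac_simps) (rule sum.swap)
    also have "\<dots> = (\<Sum>i\<le>n. ((-s)^i / fact i * ((-t)^(n-i) / fact (n-i))) * innerV w r y ((?L ^^ n) x))"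
      by (intro sum.cong refl) (simp add: Lop_funpow_selfadj)
    also have "\<dots> = (-(s+t))^n / fact n * innerV w r y ((?L ^^ n) x)"
      unfolding sum_distrib_right[symmetric] exp_series_coeff_add ..
    finally show ?thesis .
  qed
  show ?thesis
    using sums_unique2[OF prod] innerV_expL_sums[where t = "s + t"] unfolding terms by simp
qed

lemma expL_0: "expL w r \<gamma> 0 u = u"
proof -
  have "(\<lambda>k. ((-0::real)^k / fact k) *\<^sub>R (Lop w r \<gamma> ^^ k) u) = (\<lambda>k. if k = 0 then u else 0)"
    by auto
  then show ?thesis using sums_unique2[OF expL_sums[of 0 u]] sums_single[of 0 "\<lambda>_. u"] by simp
qed

lemma expL_one: "expL w r \<gamma> t 1 = 1"
proof -
  have "(\<lambda>k. ((-t)^k / fact k) *\<^sub>R (Lop w r \<gamma> ^^ k) 1) = (\<lambda>k. if k = 0 then 1 else 0)"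
  proof
    show "((-t)^k / fact k) *\<^sub>R (Lop w r \<gamma> ^^ k) 1 = (if k = 0 then 1 else 0)" for k
      using Lop_funpow_Suc_one[of "k - 1"] by (cases k) simp_all
  qed
  then show ?thesis using sums_unique2[OF expL_sums[of t 1]] sums_single[of 0 "\<lambda>_. 1"] by simp
qed

lemma expL_diff: "expL w r \<gamma> t (a - b) = expL w r \<gamma> t a - expL w r \<gamma> t b"
proof -
  have "(\<lambda>k. ((-t)^k / fact k) *\<^sub>R (Lop w r \<gamma> ^^ k) (a - b)) sums (expL w r \<gamma> t a - expL w r \<gamma> t b)"
    using sums_diff[OF expL_sums expL_sums]
    by (simp add: linear_diff[OF linear_Lop_funpow] scaleR_diff_right)
  then show ?thesis using sums_unique2[OF expL_sums] by blast
qed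

lemma expL_selfadj: "innerV w r (expL w r \<gamma> t y) x = innerV w r y (expL w r \<gamma> t x)"
  using innerV_expL_expL[of t y 0 x] by (simp add: expL_0)

text \<open>Write <x, e^{-tL}x> as |e^{-tL/2}x|^2 and invert e^{-tL/2} by e^{tL/2}.\<close>
lemma innerV_expL_pos:
  assumes "x \<noteq> 0" shows "0 < innerV w r x (expL w r \<gamma> t x)"
proof -
  let ?F = "expL w r \<gamma> (t/2) x"
  have "?F \<noteq> 0"
  proof
    assume "?F = 0"
    then have "innerV w r (expL w r \<gamma> (-(t/2)) x) ?F = 0" by simp
    then have "innerV w r x x = 0" by (simp add: innerV_expL_expL expL_0)
    then show False using innerV_self_pos[OF assms] by simp
  qed
  then show ?thesis using innerV_self_pos[of ?F] innerV_expL_expL[of "t/2" x "t/2" x] by simp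
qed

lemma Jtau_diff:
  "Jtau w r \<gamma> \<tau> v - Jtau w r \<gamma> \<tau> u =
    (dJ w r \<gamma> \<tau> u v - dJ w r \<gamma> \<tau> u u) - innerV w r (v - u) (expL w r \<gamma> \<tau> (v - u))"
proof -
  let ?E = "expL w r \<gamma> \<tau>"
  have "innerV w r 1 (?E z) = innerV w r 1 z" for z
    using expL_selfadj[of \<tau> 1 z] by (simp add: expL_one)
  moreover have "innerV w r v (?E u) = innerV w r u (?E v)"
    using expL_selfadj[of \<tau> v u] by (simp add: innerV_comm)
  ultimately show ?thesis
    unfolding Jtau_def dJ_def expL_diff innerV_diff_left innerV_diff_right innerV_scaleR_left
    by (simp add: expL_selfadj innerV_comm[of _ _ "?E u" u])
qed

lemma mcstep_Jtau_descent:
  assumes "mcstep w r \<gamma> \<tau> M vold vnew" and "vold \<in> KM w r M" and "mass w r vnew = M"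
  shows "Jtau w r \<gamma> \<tau> vnew \<le> Jtau w r \<gamma> \<tau> vold
    \<and> (Jtau w r \<gamma> \<tau> vnew = Jtau w r \<gamma> \<tau> vold \<longleftrightarrow> vnew = vold)"
proof -
  have "dJ w r \<gamma> \<tau> vold vnew \<le> dJ w r \<gamma> \<tau> vold vold"
    by (rule mcstep_minimises_dJ[OF assms(1,3,2)])
  moreover have "vnew \<noteq> vold \<Longrightarrow> 0 < innerV w r (vnew - vold) (expL w r \<gamma> \<tau> (vnew - vold))"
    by (simp add: innerV_expL_pos)
  ultimately show ?thesis using Jtau_diff[of \<tau> vnew vold] by fastforce
qed

lemma finite_VabM: "finite (VabM w r M)"
proof -
  define b where "b = (\<lambda>(f::'v \<Rightarrow> bool) j. if f j then (1::real) else 0)"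
  define G where "G = (\<lambda>(i::'v, f::'v \<Rightarrow> bool). (\<chi> j. if j = i then
        (M - (\<Sum>j\<in>UNIV - {i}. deg w j powr r * b f j)) / deg w i powr r else b f j) :: real^'v)"
  have "VabM w r M \<subseteq> range G"
  proof
    fix u assume "u \<in> VabM w r M"
    then obtain i where i: "\<forall>j. j \<noteq> i \<longrightarrow> u$j = 0 \<or> u$j = 1" and m: "mass w r u = M"
      by (auto simp: VabM_def KM_def)
    define f where "f = (\<lambda>j. u$j = 1)"
    have bf: "j \<noteq> i \<Longrightarrow> b f j = u$j" for j using i by (auto simp: b_def f_def)
    have "M = deg w i powr r * u$i + (\<Sum>j\<in>UNIV - {i}. deg w j powr r * b f j)"
      using m unfolding mass_def by (simp add: sum.remove[of UNIV i] bf)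
    then have "u$i = (M - (\<Sum>j\<in>UNIV - {i}. deg w j powr r * b f j)) / deg w i powr r"
      using deg_powr_pos[of i r] by (simp add: field_simps)
    then have "u = G (i, f)" unfolding G_def by (auto simp: vec_eq_iff bf)
    then show "u \<in> range G" by blast
  qed
  then show ?thesis by (rule finite_subset) simp
qed

end

lemma eventually_constant_of_strict_descent:
  fixes f :: "'a \<Rightarrow> real"
  assumes "finite (range v)"
    and "\<And>k. f (v (Suc k)) \<le> f (v k)"
    and "\<And>k. f (v (Suc k)) = f (v k) \<Longrightarrow> v (Suc k) = v k"
  obtains K where "\<And>k. K \<le> k \<Longrightarrow> v k = v K"
proof -
  have fin: "finite (range (\<lambda>k. f (v k)))"
    using finite_imageI[OF assms(1), of f] by (simp add: image_image)
  have "Min (range (\<lambda>k. f (v k))) \<in> range (\<lambda>k. f (v k))"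
    using fin by (intro Min_in) auto
  then obtain K where K: "f (v K) = Min (range (\<lambda>k. f (v k)))" by (metis rangeE)
  have "v k = v K" if "K \<le> k" for k
    using that
  proof (induction k rule: dec_induct)
    case (step k)
    have "f (v K) \<le> f (v (Suc k))" unfolding K by (rule Min_le[OF fin]) (rule rangeI)
    moreover have "f (v (Suc k)) \<le> f (v K)" using assms(2)[of k] step.IH by simp
    ultimately have "v (Suc k) = v k" using assms(3)[of k] step.IH by simp
    then show ?case using step.IH by simp
  qed simp
  then show ?thesis using that by blast
qed

theorem lemma5p30:
  fixes w :: "'v::finite \<Rightarrow> 'v \<Rightarrow> real" and r \<gamma> \<tau> M :: real
    and v :: "nat \<Rightarrow> real^'v" and N :: enat
  assumes "wgraph w" and "0 \<le> r" and "r \<le> 1" and "0 \<le> \<gamma>" and "0 < \<tau>" and "0 \<le> M"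
    and "v 0 \<in> VabM w r M"
    and "\<And>k. 1 \<le> k \<Longrightarrow> enat k \<le> N \<Longrightarrow> v k \<in> VabM w r M"
    and "\<And>k. 1 \<le> k \<Longrightarrow> enat k \<le> N \<Longrightarrow> mcstep w r \<gamma> \<tau> M (v (k - 1)) (v k)"
  shows "(\<forall>k. 1 \<le> k \<and> enat k \<le> N \<longrightarrow>
            v k \<in> KM w r M \<and> (\<forall>u \<in> KM w r M. dJ w r \<gamma> \<tau> (v (k - 1)) (v k) \<le> dJ w r \<gamma> \<tau> (v (k - 1)) u))
       \<and> (\<forall>k. 1 \<le> k \<and> enat k \<le> N \<longrightarrow>
            Jtau w r \<gamma> \<tau> (v k) \<le> Jtau w r \<gamma> \<tau> (v (k - 1)) \<and>
            (Jtau w r \<gamma> \<tau> (v k) = Jtau w r \<gamma> \<tau> (v (k - 1)) \<longleftrightarrow> v k = v (k - 1)))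
       \<and> (\<exists>K::nat. enat K \<le> N \<and> (\<forall>k. K \<le> k \<and> enat k \<le> N \<longrightarrow> v k = v K))"
proof -
  interpret graph_operators w r \<gamma> by unfold_locales (fact assms(1))
  let ?J = "Jtau w r \<gamma> \<tau>"
  have VabM: "enat k \<le> N \<Longrightarrow> v k \<in> VabM w r M" for k
    using assms(7,8) by (cases "k = 0") auto
  then have KM: "enat k \<le> N \<Longrightarrow> v k \<in> KM w r M" for k
    by (simp add: VabM_def)
  have dJ_min: "v k \<in> KM w r M \<and> (\<forall>u \<in> KM w r M. dJ w r \<gamma> \<tau> (v (k - 1)) (v k) \<le> dJ w r \<gamma> \<tau> (v (k - 1)) u)"
    if "1 \<le> k" "enat k \<le> N" for k
    using KM[OF that(2)] mcstep_minimises_dJ[OF assms(9)[OF that]] by (simp add: KM_def)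
  have descent: "?J (v k) \<le> ?J (v (k - 1)) \<and> (?J (v k) = ?J (v (k - 1)) \<longleftrightarrow> v k = v (k - 1))"
    if "1 \<le> k" "enat k \<le> N" for k
  proof -
    have "enat (k - 1) \<le> N" using that(2) by (meson diff_le_self enat_ord_simps(1) order_trans)
    then show ?thesis
      using mcstep_Jtau_descent[OF assms(9)[OF that] KM] KM[OF that(2)] by (simp add: KM_def)
  qed
  have "\<exists>K. enat K \<le> N \<and> (\<forall>k. K \<le> k \<and> enat k \<le> N \<longrightarrow> v k = v K)"
  proof (cases N)
    case (enat n)
    then show ?thesis by (intro exI[of _ n]) auto
  next
    case infinity
    have "finite (range v)" using finite_VabM VabM infinity by (auto intro: finite_subset)
    then obtain K where "\<And>k. K \<le> k \<Longrightarrow> v k = v K"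
      using descent[of "Suc _"] infinity by (auto intro: eventually_constant_of_strict_descent[of v ?J])
    then show ?thesis using infinity by auto
  qed
  then show ?thesis using dJ_min descent by blast
qed

end
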